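(* Let $d$ be a homogeneous distance on $\mathbb H$ with closed unit ball $B$ centered at $0$. Assume there exist $\vec v\in\{(v_1,v_2,0)\}\subset\mathbb R^3$, $\vec v\neq0$, and $\bar\epsilon>0$ such that $\Omega_\epsilon(\vec v)\neq\emptyset$ for all $0<\epsilon\leq\bar\epsilon$. Then BCP does not hold in $(\mathbb H,d)$.
   Context: $\mathbb H=\mathbb R^3$ with group law $(x,y,z)\cdot(x',y',z')=(x+x',y+y',z+z'+\tfrac12(xy'-yx'))$, dilations $\delta_\lambda(x,y,z)=(\lambda x,\lambda y,\lambda^2z)$. A distance $d$ is homogeneous if it induces the Euclidean topology, is left invariant and satisfies $d(\delta_\lambda p,\delta_\lambda q)=\lambda d(p,q)$. For $p\in\mathbb H$, $\vec v\neq 0$ and $\beta\in(0,\pi/2)$, $\mathrm{cone}(p,\vec v,\beta)$ is the Euclidean half-cone in $\mathbb R^3$ with vertex $p$, axis $p+\mathbb R^+\vec v$ and opening $2\beta$. A vector $\vec v\neq0$ points out of $B$ at $p\in\partial B$ if there are an open neighbourhood $U$ of $p$ and $\beta\in(0,\pi/2)$ with $B\cap\mathrm{cone}(p,\vec v,\beta)\cap U=\{p\}$. For $p=(x_p,y_p,z_p)$, $\tau_p(q)=p\cdot q$ is affine and $(\tau_p)_*$ denotes its linear part: $(\tau_p)_*(v_1,v_2,v_3)=(v_1,v_2,v_3+\tfrac12(x_pv_2-y_pv_1))$. Let $\hat\pi(x,y,z)=(x,y,0)$. $\Omega(\vec v)$ is the set of $q\in\partial B$ such that $(\tau_{q^{-1}})_*(\vec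 v)$ points out of $B$ at $q^{-1}$; $\Omega_\epsilon(\vec v)$ is the set of $q\in\Omega(\vec v)$ such that $\hat\pi(q)=\lambda\vec w$ for some $\lambda>0$ and some $\vec w\in\operatorname{Im}\hat\pi$ with $\|\vec w-\vec v\|\leq\epsilon$ (Euclidean norm). BCP: there is $N\geq1$ such that for every bounded $A$ and every family $\mathcal B$ of closed balls with each point of $A$ the center of some ball of $\mathcal B$, some subfamily $\mathcal F$ satisfies $\chi_A\le\sum_{B\in\mathcal F}\chi_B\le N$. *)

theory Defs
  imports "HOL-Analysis.Analysis"
begin

type_synonym hpoint = "real \<times> real \<times> real"

definition hmult :: "hpoint \<Rightarrow> hpoint \<Rightarrow> hpoint" where
  "hmult p q = (case p of (x, y, z) \<Rightarrow> case q of (x', y', z') \<Rightarrow>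
      (x + x', y + y', z + z' + (1/2) * (x * y' - y * x')))"

definition hinv :: "hpoint \<Rightarrow> hpoint" where
  "hinv p = (case p of (x, y, z) \<Rightarrow> (-x, -y, -z))"

definition hdil :: "real \<Rightarrow> hpoint \<Rightarrow> hpoint" where
  "hdil l p = (case p of (x, y, z) \<Rightarrow> (l * x, l * y, l^2 * z))"

definition is_distance :: "(hpoint \<Rightarrow> hpoint \<Rightarrow> real) \<Rightarrow> bool" where
  "is_distance d \<longleftrightarrow>
     (\<forall>p q. 0 \<le> d p q) \<and> (\<forall>p q. d p q = 0 \<longleftrightarrow> p = q) \<and>
     (\<forall>p q. d p q = d q p) \<and> (\<forall>p q r. d p r \<le> d p q + d q r)"

definition induces_euclidean_topology :: "(hpoint \<Rightarrow> hpoint \<Rightarrow> real) \<Rightarrow> bool" where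
  "induces_euclidean_topology d \<longleftrightarrow>
     (\<forall>U :: hpoint set. open U \<longleftrightarrow> (\<forall>p\<in>U. \<exists>r>0. \<forall>q. d p q < r \<longrightarrow> q \<in> U))"

definition homogeneous_distance :: "(hpoint \<Rightarrow> hpoint \<Rightarrow> real) \<Rightarrow> bool" where
  "homogeneous_distance d \<longleftrightarrow>
     is_distance d \<and> induces_euclidean_topology d \<and>
     (\<forall>p q q'. d (hmult p q) (hmult p q') = d q q') \<and>
     (\<forall>l>0. \<forall>p q. d (hdil l p) (hdil l q) = l * d p q)"

definition dcball :: "(hpoint \<Rightarrow> hpoint \<Rightarrow> real) \<Rightarrow> hpoint \<Rightarrow> real \<Rightarrow> hpoint set" where
  "dcball d c r = {q. d c q \<le> r}"

text \<open>Euclidean closed half-cone with vertex p, axis p + R^+ v, opening 2 beta.\<close>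
definition cone :: "hpoint \<Rightarrow> hpoint \<Rightarrow> real \<Rightarrow> hpoint set" where
  "cone p v \<beta> = {q. (q - p) \<bullet> v \<ge> norm (q - p) * norm v * cos \<beta>}"

definition points_out :: "hpoint set \<Rightarrow> hpoint \<Rightarrow> hpoint \<Rightarrow> bool" where
  "points_out B v p \<longleftrightarrow> v \<noteq> 0 \<and>
     (\<exists>U \<beta>. open U \<and> p \<in> U \<and> 0 < \<beta> \<and> \<beta> < pi/2 \<and> B \<inter> cone p v \<beta> \<inter> U = {p})"

text \<open>Linear part of the left translation by p.\<close>
definition tau_star :: "hpoint \<Rightarrow> hpoint \<Rightarrow> hpoint" where
  "tau_star p v = (case p of (xp, yp, zp) \<Rightarrow> case v of (v1, v2, v3) \<Rightarrow>
      (v1, v2, v3 + (1/2) * (xp * v2 - yp * v1)))"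

definition hpi :: "hpoint \<Rightarrow> hpoint" where
  "hpi p = (case p of (x, y, z) \<Rightarrow> (x, y, 0))"

definition Omega :: "hpoint set \<Rightarrow> hpoint \<Rightarrow> hpoint set" where
  "Omega B v = {q \<in> frontier B. points_out B (tau_star (hinv q) v) (hinv q)}"

definition Omega_eps :: "hpoint set \<Rightarrow> real \<Rightarrow> hpoint \<Rightarrow> hpoint set" where
  "Omega_eps B \<epsilon> v = {q \<in> Omega B v. \<exists>l>0. \<exists>w \<in> range hpi.
       norm (w - v) \<le> \<epsilon> \<and> hpi q = l *\<^sub>R w}"

text \<open>A family of closed balls is a set of
  (center, radius) pairs with positive radius; the bound on the sum of
  characteristic functions says every point lies in at most N balls of F.\<close>
definition BCP :: "(hpoint \<Rightarrow> hpoint \<Rightarrow> real) \<Rightarrow> bool" where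
  "BCP d \<longleftrightarrow> (\<exists>N::nat. N \<ge> 1 \<and>
     (\<forall>(A :: hpoint set) (\<B> :: (hpoint \<times> real) set).
        (\<exists>c R. \<forall>a\<in>A. d c a \<le> R) \<longrightarrow>
        (\<forall>(c, r)\<in>\<B>. r > 0) \<longrightarrow>
        (\<forall>a\<in>A. \<exists>r. (a, r) \<in> \<B>) \<longrightarrow>
        (\<exists>\<F> \<subseteq> \<B>. (\<forall>a\<in>A. \<exists>(c, r)\<in>\<F>. a \<in> dcball d c r) \<and>
           (\<forall>x. finite {(c, r)\<in>\<F>. x \<in> dcball d c r} \<and>
                 card {(c, r)\<in>\<F>. x \<in> dcball d c r} \<le> N))))"

end

theory Submission
  imports Defs
begin

text \<open>Every \<open>q \<in> Omega\<close> yields balls \<open>dcball d (hdil r q) r\<close> through \<open>0\<close>. We build arbitrarily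
  large finite families of such balls none of which contains the centre of another; a family of
  this kind can only be covered by itself, and all its balls contain \<open>0\<close>, so BCP would bound its
  size. A new ball of tiny radius \<open>t\<close> is centred at \<open>hdil t q'\<close> with \<open>q' \<in> Omega_eps\<close>: dilates of
  \<open>q'\<close> approach \<open>0\<close> almost horizontally, in a direction close to \<open>v\<close>, and \<open>tau_star (hinv q) v\<close> points
  out of the unit ball at \<open>hinv q\<close>, so the new centre lies outside all old balls, while the old
  centres are at distance about \<open>r \<ge> 2 t\<close> from it.\<close>

lemma hmult_components:
  "hmult p q = (fst p + fst q, fst (snd p) + fst (snd q),
     snd (snd p) + snd (snd q) + 1/2 * (fst p * fst (snd q) - fst (snd p) * fst q))"
  by (cases p; cases q) (simp add: hmult_def)

lemma hdil_components: "hdil s q = (s * fst q, s * fst (snd q), s\<^sup>2 * snd (snd q))"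
  by (cases q) (simp add: hdil_def)

lemma tau_star_components:
  "tau_star p y = (fst y, fst (snd y), snd (snd y) + 1/2 * (fst p * fst (snd y) - fst (snd p) * fst y))"
  by (cases p; cases y) (simp add: tau_star_def)

lemma hmult_hinv_left [simp]: "hmult (hinv q) q = 0"
  by (cases q) (simp add: hmult_def hinv_def zero_prod_def)

lemma hmult_minus_eq_tau_star: "hmult p x - p = tau_star p x"
  by (cases p; cases x) (simp add: hmult_def tau_star_def)

lemma hdil_0_right [simp]: "hdil s 0 = 0"
  by (simp add: hdil_components zero_prod_def)

lemma hdil_hdil: "hdil r (hdil s q) = hdil (r * s) q"
  by (simp add: hdil_components power_mult_distrib)

lemma hdil_eq_scaleR: "hdil s q = s *\<^sub>R (fst q, fst (snd q), s * snd (snd q))"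
  by (simp add: hdil_components power2_eq_square)

lemma tau_star_scaleR: "tau_star p (t *\<^sub>R y) = t *\<^sub>R tau_star p y"
  by (simp add: tau_star_components algebra_simps)

lemma tendsto_hmult_hdil: "((\<lambda>s. hmult p (hdil s q)) \<longlongrightarrow> p) (at_right 0)"
  unfolding hmult_components hdil_components
  by (cases p; cases q) (auto intro!: tendsto_eq_intros)

definition cone_gap :: "hpoint \<Rightarrow> real \<Rightarrow> hpoint \<Rightarrow> real" where
  "cone_gap w \<beta> y = y \<bullet> w - norm y * norm w * cos \<beta>"

lemma mem_cone_iff_cone_gap: "q \<in> cone p w \<beta> \<longleftrightarrow> 0 \<le> cone_gap w \<beta> (q - p)"
  by (simp add: cone_def cone_gap_def)

lemma cone_gap_scaleR: "0 \<le> t \<Longrightarrow> cone_gap w \<beta> (t *\<^sub>R y) = t * cone_gap w \<beta> y"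
  by (simp add: cone_gap_def algebra_simps)

lemma cone_gap_0 [simp]: "cone_gap w \<beta> 0 = 0"
  by (simp add: cone_gap_def)

lemma cone_gap_axis_pos:
  assumes "w \<noteq> 0" "0 < \<beta>" "\<beta> < pi"
  shows "0 < cone_gap w \<beta> w"
proof -
  have "cos \<beta> < cos 0"
    using assms by (intro cos_monotone_0_pi) auto
  then show ?thesis
    using assms(1) by (simp add: cone_gap_def dot_square_norm power2_eq_square)
qed

lemma isCont_cone_gap [continuous_intros]:
  "isCont f x \<Longrightarrow> isCont (\<lambda>y. cone_gap w \<beta> (f y)) x"
  unfolding cone_gap_def by (intro continuous_intros)

text \<open>Dilations flatten every point towards the horizontal plane: a positively homogeneous
  function that is positive at the projection \<open>hpi q\<close> is positive on small dilates of \<open>q\<close>.\<close>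

lemma eventually_pos_hdil:
  fixes f :: "hpoint \<Rightarrow> real"
  assumes cont: "isCont f (hpi q)" and homog: "\<And>t y. 0 < t \<Longrightarrow> f (t *\<^sub>R y) = t * f y"
    and pos: "0 < f (hpi q)"
  shows "\<forall>\<^sub>F s in at_right 0. 0 < f (hdil s q)"
proof -
  define flat where "flat s = (fst q, fst (snd q), s * snd (snd q))" for s :: real
  have "(flat \<longlongrightarrow> hpi q) (at_right 0)"
    unfolding flat_def by (cases q) (auto simp: hpi_def intro!: tendsto_eq_intros)
  then have "((\<lambda>s. f (flat s)) \<longlongrightarrow> f (hpi q)) (at_right 0)"
    by (rule isCont_tendsto_compose[OF cont])
  then have flat_pos: "\<forall>\<^sub>F s in at_right 0. 0 < f (flat s)"
    using pos by (rule order_tendstoD)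
  have hdil_flat: "f (hdil s q) = s * f (flat s)" if "0 < s" for s
    using homog[OF that, of "flat s"] by (simp only: hdil_eq_scaleR flat_def)
  show ?thesis
    using flat_pos eventually_at_right_less[of 0] by eventually_elim (simp add: hdil_flat)
qed

definition separated_family ::
  "(hpoint \<Rightarrow> hpoint \<Rightarrow> real) \<Rightarrow> hpoint \<Rightarrow> (hpoint \<times> real) set \<Rightarrow> bool" where
  "separated_family d x P \<longleftrightarrow> finite P \<and> (\<forall>(c, r)\<in>P. 0 < r \<and> x \<in> dcball d c r) \<and>
     (\<forall>(c, r)\<in>P. \<forall>(c', r')\<in>P. (c, r) \<noteq> (c', r') \<longrightarrow> c' \<notin> dcball d c r)"

lemma separated_family_insert:
  assumes "separated_family d x P" "0 < r" "x \<in> dcball d c r"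
    and "\<forall>(c', r')\<in>P. c \<notin> dcball d c' r' \<and> c' \<notin> dcball d c r"
  shows "separated_family d x (insert (c, r) P)"
  using assms unfolding separated_family_def by auto

text \<open>A covering subfamily of a separated family must keep every ball, since each centre lies
  in its own ball only; all of them contain \<open>x\<close>.\<close>

lemma BCP_bounds_card_separated_family:
  assumes "BCP d"
  obtains N where "\<And>P. separated_family d x P \<Longrightarrow> card P \<le> N"
proof -
  obtain N where N: "\<forall>(A :: hpoint set) (\<B> :: (hpoint \<times> real) set).
        (\<exists>c R. \<forall>a\<in>A. d c a \<le> R) \<longrightarrow> (\<forall>(c, r)\<in>\<B>. r > 0) \<longrightarrow> (\<forall>a\<in>A. \<exists>r. (a, r) \<in> \<B>) \<longrightarrow>
        (\<exists>\<F> \<subseteq> \<B>. (\<forall>a\<in>A. \<exists>(c, r)\<in>\<F>. a \<in> dcball d c r) \<and>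
           (\<forall>x. finite {(c, r)\<in>\<F>. x \<in> dcball d c r} \<and> card {(c, r)\<in>\<F>. x \<in> dcball d c r} \<le> N))"
    using assms unfolding BCP_def by blast
  have "card P \<le> N" if P: "separated_family d x P" for P
  proof -
    have fin: "finite P" and pos: "\<forall>(c, r)\<in>P. 0 < r"
      and through: "\<forall>(c, r)\<in>P. x \<in> dcball d c r"
      and sep: "\<And>c r c' r'. (c, r) \<in> P \<Longrightarrow> (c', r') \<in> P \<Longrightarrow> c' \<in> dcball d c r \<Longrightarrow> (c, r) = (c', r')"
      using P unfolding separated_family_def by fast+
    have "\<forall>a\<in>fst ` P. d x a \<le> Max (d x ` fst ` P)"
      using fin by simp
    then have bounded: "\<exists>c R. \<forall>a\<in>fst ` P. d c a \<le> R"
      by blast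
    have centres: "\<forall>a\<in>fst ` P. \<exists>r. (a, r) \<in> P"
      by force
    obtain F where "F \<subseteq> P" and cover: "\<forall>a\<in>fst ` P. \<exists>(c, r)\<in>F. a \<in> dcball d c r"
      and overlap: "\<forall>x. finite {(c, r)\<in>F. x \<in> dcball d c r} \<and> card {(c, r)\<in>F. x \<in> dcball d c r} \<le> N"
      using N[THEN spec[of _ "fst ` P"], THEN spec[of _ P], THEN mp, OF bounded,
          THEN mp, OF pos, THEN mp, OF centres] by blast
    have "P \<subseteq> F"
    proof clarify
      fix c' r' assume "(c', r') \<in> P"
      then obtain c r where "(c, r) \<in> F" "c' \<in> dcball d c r"
        using cover by force
      with \<open>F \<subseteq> P\<close> \<open>(c', r') \<in> P\<close> show "(c', r') \<in> F"
        using sep by blast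
    qed
    then have "P \<subseteq> {(c, r)\<in>F. x \<in> dcball d c r}"
      using through by blast
    then show ?thesis
      using overlap card_mono order_trans by blast
  qed
  then show ?thesis
    by (rule that)
qed

text \<open>The ball \<open>dcball d (hdil r q) r\<close> is the \<open>r\<close>-dilate of the unit ball around a point \<open>q\<close>
  of \<open>Omega\<close>, so it passes through \<open>0\<close>.\<close>

definition Omega_balls :: "(hpoint \<Rightarrow> hpoint \<Rightarrow> real) \<Rightarrow> hpoint \<Rightarrow> (hpoint \<times> real) set" where
  "Omega_balls d v = {(hdil r q, r) |r q. 0 < r \<and> q \<in> Omega (dcball d 0 1) v}"

context
  fixes d :: "hpoint \<Rightarrow> hpoint \<Rightarrow> real"
  assumes hom: "homogeneous_distance d"
begin

lemma hdist_commute: "d p q = d q p"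
  using hom unfolding homogeneous_distance_def is_distance_def by blast

lemma hdist_triangle: "d p r \<le> d p q + d q r"
  using hom unfolding homogeneous_distance_def is_distance_def by blast

lemma hdist_hmult_left [simp]: "d (hmult p q) (hmult p q') = d q q'"
  using hom unfolding homogeneous_distance_def by blast

lemma hdist_hdil: "0 < l \<Longrightarrow> d (hdil l p) (hdil l q) = l * d p q"
  using hom unfolding homogeneous_distance_def by blast

lemma open_hdist_less: "open {q. d c q < r}"
proof -
  have "d c q' < r" if "d p q' < r - d c p" for p q'
    using that hdist_triangle[of c q' p] by linarith
  then show ?thesis
    using hom unfolding homogeneous_distance_def induces_euclidean_topology_def
    by (metis diff_gt_0_iff_gt mem_Collect_eq)
qed

lemma open_hdist_greater: "open {q. r < d c q}"
proof -
  have "r < d c q'" if "d p q' < d c p - r" for p q'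
    using that hdist_triangle[of c p q'] hdist_commute[of p q'] by linarith
  then show ?thesis
    using hom unfolding homogeneous_distance_def induces_euclidean_topology_def
    by (metis diff_gt_0_iff_gt mem_Collect_eq)
qed

lemma hdist_frontier_dcball: "q \<in> frontier (dcball d c r) \<Longrightarrow> d c q = r"
proof -
  assume q: "q \<in> frontier (dcball d c r)"
  have "closed (dcball d c r)"
    using open_hdist_greater[of r c] by (simp add: closed_def dcball_def Compl_eq not_le)
  then have "d c q \<le> r"
    using q by (simp add: frontier_def closure_closed dcball_def)
  moreover have "{q. d c q < r} \<subseteq> interior (dcball d c r)"
    by (intro interior_maximal open_hdist_less) (auto simp: dcball_def)
  then have "\<not> d c q < r"
    using q by (auto simp: frontier_def)
  ultimately show ?thesis by simp
qed

lemma hdist_gt_1_if_in_cone: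
  assumes cone: "dcball d 0 1 \<inter> cone (hinv q) w \<beta> \<inter> U = {hinv q}"
    and U: "hmult (hinv q) x \<in> U" and gap: "0 < cone_gap w \<beta> (tau_star (hinv q) x)"
  shows "1 < d q x"
proof -
  define p where "p = hmult (hinv q) x"
  have "0 < cone_gap w \<beta> (p - hinv q)"
    using gap by (simp add: p_def hmult_minus_eq_tau_star)
  then have "p \<in> cone (hinv q) w \<beta>" "p \<noteq> hinv q"
    by (auto simp: mem_cone_iff_cone_gap)
  then have "p \<notin> dcball d 0 1"
    using cone U by (auto simp: p_def)
  moreover have "d 0 p = d q x"
    using hdist_hmult_left[of "hinv q" q x] by (simp add: p_def)
  ultimately show ?thesis
    by (simp add: dcball_def)
qed

text \<open>Since \<open>tau_star (hinv q) v\<close> points out of the ball at \<open>hinv q\<close>, so does \<open>tau_star (hinv q) u\<close>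
  for every \<open>u\<close> close to \<open>v\<close>. Small dilates of \<open>q' \<in> Omega_eps\<close> are nearly horizontal in such a
  direction, hence their left translates by \<open>hinv q\<close> leave the unit ball.\<close>

lemma eventually_hdist_hdil_gt_1:
  assumes q: "q \<in> Omega (dcball d 0 1) v"
  shows "\<forall>\<^sub>F \<epsilon> in at_right 0. \<forall>q'\<in>Omega_eps (dcball d 0 1) \<epsilon> v.
           \<forall>\<^sub>F s in at_right 0. 1 < d q (hdil s q')"
proof -
  define w where "w = tau_star (hinv q) v"
  obtain U \<beta> where w: "w \<noteq> 0" and U: "open U" "hinv q \<in> U" and \<beta>: "0 < \<beta>" "\<beta> < pi/2"
    and cone: "dcball d 0 1 \<inter> cone (hinv q) w \<beta> \<inter> U = {hinv q}"
    using q by (auto simp: Omega_def points_out_def w_def)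
  define g where "g y = cone_gap w \<beta> (tau_star (hinv q) y)" for y
  have g_cont: "isCont g y" for y
    unfolding g_def tau_star_components by (intro continuous_intros)
  have g_homog: "g (t *\<^sub>R y) = t * g y" if "0 < t" for t y
    using that by (simp add: g_def tau_star_scaleR cone_gap_scaleR)
  have "0 < g v"
    using cone_gap_axis_pos[OF w] \<beta> by (simp add: g_def w_def)
  then have "\<forall>\<^sub>F y in nhds v. 0 < g y"
    using g_cont by (intro order_tendstoD) (simp_all add: isCont_def tendsto_at_iff_tendsto_nhds)
  then obtain \<delta> where "0 < \<delta>" and g_pos: "\<And>y. dist y v < \<delta> \<Longrightarrow> 0 < g y"
    by (auto simp: eventually_nhds_metric)
  have "\<forall>q'\<in>Omega_eps (dcball d 0 1) \<epsilon> v. \<forall>\<^sub>F s in at_right 0. 1 < d q (hdil s q')"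
    if "\<epsilon> < \<delta>" for \<epsilon>
  proof
    fix q' assume "q' \<in> Omega_eps (dcball d 0 1) \<epsilon> v"
    then obtain l u where "0 < l" "norm (u - v) \<le> \<epsilon>" "hpi q' = l *\<^sub>R u"
      unfolding Omega_eps_def by blast
    with that g_pos g_homog have "0 < g (hpi q')"
      by (simp add: dist_norm)
    then have "\<forall>\<^sub>F s in at_right 0. 0 < g (hdil s q')"
      using g_cont g_homog by (intro eventually_pos_hdil)
    moreover have "\<forall>\<^sub>F s in at_right 0. hmult (hinv q) (hdil s q') \<in> U"
      using tendsto_hmult_hdil U by (rule topological_tendstoD)
    ultimately show "\<forall>\<^sub>F s in at_right 0. 1 < d q (hdil s q')"
      by eventually_elim (use cone in \<open>auto simp: g_def intro: hdist_gt_1_if_in_cone\<close>)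
  qed
  moreover have "\<forall>\<^sub>F \<epsilon> in at_right 0. \<epsilon> < \<delta>"
    using \<open>0 < \<delta>\<close> by (auto simp: eventually_at_right_field)
  ultimately show ?thesis
    by (auto elim: eventually_mono)
qed

lemma eventually_hdist_hdil_gt:
  assumes q: "q \<in> Omega (dcball d 0 1) v" and r: "0 < r"
  shows "\<forall>\<^sub>F \<epsilon> in at_right 0. \<forall>q'\<in>Omega_eps (dcball d 0 1) \<epsilon> v.
           \<forall>\<^sub>F t in at_right 0. r < d (hdil r q) (hdil t q')"
proof -
  have rescale: "filterlim (\<lambda>t. inverse r * t) (at_right 0) (at_right 0)"
    using filterlim_times_pos[where f="\<lambda>t. t" and p=0 and l=0 and c="inverse r", OF filterlim_ident] r
    by simp
  have scaled: "r < d (hdil r q) (hdil t q')" if "1 < d q (hdil (inverse r * t) q')" for t q'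
  proof -
    have "hdil t q' = hdil r (hdil (inverse r * t) q')"
      using r by (simp add: hdil_hdil mult.assoc[symmetric])
    then have "d (hdil r q) (hdil t q') = r * d q (hdil (inverse r * t) q')"
      using r by (simp add: hdist_hdil)
    then show ?thesis
      using that r by simp
  qed
  show ?thesis
    using eventually_hdist_hdil_gt_1[OF q]
  proof (rule eventually_mono, intro ballI)
    fix \<epsilon> q'
    assume "\<forall>q'\<in>Omega_eps (dcball d 0 1) \<epsilon> v. \<forall>\<^sub>F s in at_right 0. 1 < d q (hdil s q')"
      and "q' \<in> Omega_eps (dcball d 0 1) \<epsilon> v"
    then have "\<forall>\<^sub>F s in at_right 0. 1 < d q (hdil s q')"
      by blast
    then have "\<forall>\<^sub>F t in at_right 0. 1 < d q (hdil (inverse r * t) q')"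
      using rescale by (rule eventually_compose_filterlim)
    then show "\<forall>\<^sub>F t in at_right 0. r < d (hdil r q) (hdil t q')"
      by (rule eventually_mono) (rule scaled)
  qed
qed

lemma hdist_0_Omega_ball:
  assumes "(c, r) \<in> Omega_balls d v"
  shows "d 0 c = r"
proof -
  obtain q where "0 < r" "c = hdil r q" "q \<in> frontier (dcball d 0 1)"
    using assms by (auto simp: Omega_balls_def Omega_def)
  then show ?thesis
    using hdist_hdil[of r 0 q] hdist_frontier_dcball[of q 0 1] by simp
qed

lemma eventually_hdist_Omega_family_gt:
  assumes "finite P" "P \<subseteq> Omega_balls d v"
  shows "\<forall>\<^sub>F \<epsilon> in at_right 0. \<forall>q'\<in>Omega_eps (dcball d 0 1) \<epsilon> v.
           \<forall>\<^sub>F t in at_right 0. \<forall>(c, r)\<in>P. r < d c (hdil t q')"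
proof -
  have "\<forall>(c, r)\<in>P. \<forall>\<^sub>F \<epsilon> in at_right 0. \<forall>q'\<in>Omega_eps (dcball d 0 1) \<epsilon> v.
          \<forall>\<^sub>F t in at_right 0. r < d c (hdil t q')"
  proof clarify
    fix c r assume "(c, r) \<in> P"
    then obtain q where "c = hdil r q" "0 < r" "q \<in> Omega (dcball d 0 1) v"
      using assms(2) by (auto simp: Omega_balls_def)
    then show "\<forall>\<^sub>F \<epsilon> in at_right 0. \<forall>q'\<in>Omega_eps (dcball d 0 1) \<epsilon> v.
          \<forall>\<^sub>F t in at_right 0. r < d c (hdil t q')"
      using eventually_hdist_hdil_gt by simp
  qed
  then have "\<forall>\<^sub>F \<epsilon> in at_right 0. \<forall>(c, r)\<in>P. \<forall>q'\<in>Omega_eps (dcball d 0 1) \<epsilon> v.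
          \<forall>\<^sub>F t in at_right 0. r < d c (hdil t q')"
    using assms(1) by (simp add: eventually_ball_finite_distrib split_beta)
  then show ?thesis
  proof (rule eventually_mono, intro ballI)
    fix \<epsilon> q'
    assume "\<forall>(c, r)\<in>P. \<forall>q'\<in>Omega_eps (dcball d 0 1) \<epsilon> v. \<forall>\<^sub>F t in at_right 0. r < d c (hdil t q')"
      and "q' \<in> Omega_eps (dcball d 0 1) \<epsilon> v"
    then have "\<forall>(c, r)\<in>P. \<forall>\<^sub>F t in at_right 0. r < d c (hdil t q')"
      by fast
    then show "\<forall>\<^sub>F t in at_right 0. \<forall>(c, r)\<in>P. r < d c (hdil t q')"
      using assms(1) by (simp add: eventually_ball_finite_distrib split_beta)
  qed
qed

lemma separated_family_insert_Omega_ball: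
  assumes P: "separated_family d 0 P" "P \<subseteq> Omega_balls d v" and c: "(c, t) \<in> Omega_balls d v"
    and far: "\<forall>(c', r')\<in>P. r' < d c' c \<and> 2 * t < r'"
  shows "separated_family d 0 (insert (c, t) P)" "(c, t) \<notin> P"
proof -
  have "0 < t"
    using c by (auto simp: Omega_balls_def)
  then show "(c, t) \<notin> P"
    using far by fastforce
  show "separated_family d 0 (insert (c, t) P)"
  proof (rule separated_family_insert[OF P(1) \<open>0 < t\<close>])
    show "0 \<in> dcball d c t"
      using hdist_0_Omega_ball[OF c] hdist_commute by (simp add: dcball_def)
    show "\<forall>(c', r')\<in>P. c \<notin> dcball d c' r' \<and> c' \<notin> dcball d c t"
    proof clarify
      fix c' r' assume "(c', r') \<in> P"
      then have "r' < d c' c" "2 * t < r'" "d 0 c' = r'"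
        using far P(2) hdist_0_Omega_ball[of c' r' v] by auto
      moreover have "d 0 c' \<le> d 0 c + d c c'"
        by (rule hdist_triangle)
      ultimately show "c \<notin> dcball d c' r' \<and> c' \<notin> dcball d c t"
        using hdist_0_Omega_ball[OF c] by (simp add: dcball_def)
    qed
  qed
qed

lemma separated_Omega_family_extend:
  assumes "0 < \<epsilon>0" and nonempty: "\<forall>\<epsilon>. 0 < \<epsilon> \<and> \<epsilon> \<le> \<epsilon>0 \<longrightarrow> Omega_eps (dcball d 0 1) \<epsilon> v \<noteq> {}"
    and P: "separated_family d 0 P" "P \<subseteq> Omega_balls d v"
  obtains c r where "separated_family d 0 (insert (c, r) P)" "(c, r) \<in> Omega_balls d v" "(c, r) \<notin> P"
proof -
  have fin: "finite P"
    using P(1) by (simp add: separated_family_def)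
  have "\<forall>\<^sub>F \<epsilon> in at_right 0. 0 < \<epsilon> \<and> \<epsilon> \<le> \<epsilon>0"
    using \<open>0 < \<epsilon>0\<close> by (auto simp: eventually_at_right_field)
  with eventually_hdist_Omega_family_gt[OF fin P(2)]
  have "\<forall>\<^sub>F \<epsilon> in at_right 0. (\<forall>q'\<in>Omega_eps (dcball d 0 1) \<epsilon> v.
          \<forall>\<^sub>F t in at_right 0. \<forall>(c, r)\<in>P. r < d c (hdil t q')) \<and> 0 < \<epsilon> \<and> \<epsilon> \<le> \<epsilon>0"
    by (rule eventually_conj)
  from eventually_happens'[OF trivial_limit_at_right_real this]
  obtain \<epsilon> where "0 < \<epsilon>" "\<epsilon> \<le> \<epsilon>0" and far: "\<forall>q'\<in>Omega_eps (dcball d 0 1) \<epsilon> v.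
          \<forall>\<^sub>F t in at_right 0. \<forall>(c, r)\<in>P. r < d c (hdil t q')"
    by blast
  then obtain q' where q': "q' \<in> Omega_eps (dcball d 0 1) \<epsilon> v"
    using nonempty by blast
  have "\<forall>\<^sub>F t in at_right 0. 2 * t < r" if "(c, r) \<in> P" for c r
    using P(1) that by (auto simp: separated_family_def eventually_at_right_field intro!: exI[of _ "r / 2"])
  then have small: "\<forall>\<^sub>F t in at_right 0. \<forall>(c, r)\<in>P. 2 * t < r"
    using fin by (auto simp: eventually_ball_finite_distrib split_beta)
  have "\<forall>\<^sub>F t in at_right 0. \<forall>(c, r)\<in>P. r < d c (hdil t q')"
    using far q' by blast
  with small eventually_at_right_less[of 0]
  have "\<forall>\<^sub>F t in at_right 0. 0 < t \<and> (\<forall>(c, r)\<in>P. r < d c (hdil t q') \<and> 2 * t < r)"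
    by eventually_elim auto
  from eventually_happens'[OF trivial_limit_at_right_real this]
  obtain t where "0 < t" and t: "\<forall>(c, r)\<in>P. r < d c (hdil t q') \<and> 2 * t < r"
    by blast
  have "(hdil t q', t) \<in> Omega_balls d v"
    using q' \<open>0 < t\<close> unfolding Omega_balls_def Omega_eps_def by blast
  with separated_family_insert_Omega_ball[OF P this t] show ?thesis
    using that by blast
qed

lemma exists_separated_Omega_family:
  assumes "0 < \<epsilon>0" and "\<forall>\<epsilon>. 0 < \<epsilon> \<and> \<epsilon> \<le> \<epsilon>0 \<longrightarrow> Omega_eps (dcball d 0 1) \<epsilon> v \<noteq> {}"
  obtains P where "separated_family d 0 P" "P \<subseteq> Omega_balls d v" "card P = n"
proof (induction n arbitrary: thesis)
  case 0
  show ?case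
    by (rule 0[of "{}"]) (simp_all add: separated_family_def)
next
  case (Suc n)
  obtain P where P: "separated_family d 0 P" "P \<subseteq> Omega_balls d v" "card P = n"
    using Suc.IH by blast
  obtain c r where "separated_family d 0 (insert (c, r) P)" "(c, r) \<in> Omega_balls d v" "(c, r) \<notin> P"
    using separated_Omega_family_extend[OF assms P(1,2)] by blast
  with P show ?case
    by (intro Suc.prems[of "insert (c, r) P"]) (auto simp: separated_family_def)
qed

end

theorem theorem6p1:
  fixes d :: "hpoint \<Rightarrow> hpoint \<Rightarrow> real" and v :: hpoint and \<epsilon>0 :: real
  assumes "homogeneous_distance d"
    and "snd (snd v) = 0" and "v \<noteq> 0"
    and "\<epsilon>0 > 0"
    and "\<forall>\<epsilon>. 0 < \<epsilon> \<and> \<epsilon> \<le> \<epsilon>0 \<longrightarrow> Omega_eps (dcball d 0 1) \<epsilon> v \<noteq> {}"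
  shows "\<not> BCP d"
proof
  assume "BCP d"
  then obtain N where N: "\<And>P. separated_family d 0 P \<Longrightarrow> card P \<le> N"
    using BCP_bounds_card_separated_family by blast
  obtain P where "separated_family d 0 P" "card P = Suc N"
    using exists_separated_Omega_family[OF assms(1,4,5)] by blast
  then show False
    using N by fastforce
qed

end
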